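(* Let $w$ be a bounded positive function on $\mathbb{T}$ such that $\log w$ is integrable, and fix $0<\delta<1$. If there is $\varepsilon\in(0,\delta)$ such that $\operatorname{dist}\big(L_w^+(\delta),L_w^-(\varepsilon)\big)>0$, then $w$ is an apical Helson--Szegő weight at level $\delta$.
   Context: $\mathbb{T}$ is the unit circle with normalized Lebesgue measure. For a bounded $\psi$ and $0\le\delta\le1$, $L_\psi^+(\delta)=\{e^{i\theta}\in\mathbb{T}: |\psi(e^{i\theta})|\ge\|\psi\|_\infty\delta\}$ and $L_\psi^-(\delta)=\{e^{i\theta}\in\mathbb{T}: |\psi(e^{i\theta})|<\|\psi\|_\infty\delta\}$; $\operatorname{dist}$ is the distance between subsets of $\mathbb{T}$. For real $v\in L^1(\mathbb{T})$, $\tilde v$ denotes its conjugate function. A bounded positive function $w$ on $\mathbb{T}$ is an apical Helson--Szegő weight at level $\delta$ if $w=\exp(u+v)$ where $u\in L^\infty(\mathbb{T})$ and $v\in L^1(\mathbb{T})$ are real-valued and $\operatorname{ess\,sup}_{L_w^+(\delta)}|\tilde v|<\pi/2$. *)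

theory Defs
  imports "HOL-Analysis.Analysis"
begin

text \<open>Points of the unit circle are parametrised as cis theta, theta in [-pi, pi].
  Normalised Lebesgue measure on the circle, pulled back to the parameter theta.\<close>
definition circle_measure :: "real measure" where
  "circle_measure = density (restrict_space lborel {-pi..pi}) (\<lambda>_. ennreal (1 / (2 * pi)))"

definition ess_norm_inf :: "(complex \<Rightarrow> real) \<Rightarrow> real" where
  "ess_norm_inf w = Inf {B. AE \<theta> in circle_measure. \<bar>w (cis \<theta>)\<bar> \<le> B}"

definition Lplus :: "(complex \<Rightarrow> real) \<Rightarrow> real \<Rightarrow> complex set" where
  "Lplus w \<delta> = {z \<in> sphere 0 1. \<bar>w z\<bar> \<ge> ess_norm_inf w * \<delta>}"

definition Lminus :: "(complex \<Rightarrow> real) \<Rightarrow> real \<Rightarrow> complex set" where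
  "Lminus w \<delta> = {z \<in> sphere 0 1. \<bar>w z\<bar> < ess_norm_inf w * \<delta>}"

definition conj_fun :: "(complex \<Rightarrow> real) \<Rightarrow> real \<Rightarrow> real" where
  "conj_fun v \<theta> = Lim (at_right 0) (\<lambda>e. (1 / (2 * pi)) *
      (LINT t:{t. e \<le> \<bar>t\<bar> \<and> \<bar>t\<bar> \<le> pi}|lborel. v (cis (\<theta> - t)) * cot (t / 2)))"

definition apical_HS_weight :: "(complex \<Rightarrow> real) \<Rightarrow> real \<Rightarrow> bool" where
  "apical_HS_weight w \<delta> \<longleftrightarrow>
     bounded (w ` sphere 0 1) \<and> (\<forall>z \<in> sphere 0 1. w z > 0) \<and>
     (\<exists>u v :: complex \<Rightarrow> real.
        (\<lambda>\<theta>. u (cis \<theta>)) \<in> borel_measurable circle_measure \<and>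
        (\<exists>B. AE \<theta> in circle_measure. \<bar>u (cis \<theta>)\<bar> \<le> B) \<and>
        integrable circle_measure (\<lambda>\<theta>. v (cis \<theta>)) \<and>
        (AE \<theta> in circle_measure. w (cis \<theta>) = exp (u (cis \<theta>) + v (cis \<theta>))) \<and>
        (\<exists>M < pi / 2. AE \<theta> in circle_measure.
            cis \<theta> \<in> Lplus w \<delta> \<longrightarrow> \<bar>conj_fun v \<theta>\<bar> \<le> M))"

end

theory Submission
  imports Defs
begin

text \<open>Split \<open>log w = u + v\<close> with \<open>u = max (log w) (-n)\<close> bounded and \<open>v = min (log w + n) 0\<close>.
  For \<open>n\<close> large, \<open>v\<close> is supported in \<open>L\<^sup>-\<^sub>w(\<epsilon>)\<close>, which stays at distance \<open>D > 0\<close> from \<open>L\<^sup>+\<^sub>w(\<delta>)\<close>.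
  Hence at points of \<open>L\<^sup>+\<^sub>w(\<delta>)\<close> the conjugate function of \<open>v\<close> is an honest integral whose
  kernel is bounded by \<open>2/D\<close>, so \<open>|\<tilde>v| \<le> (6/D) \<parallel>v\<parallel>\<^sub>1\<close>; and \<open>\<parallel>v\<parallel>\<^sub>1 \<rightarrow> 0\<close> as
  \<open>n \<rightarrow> \<infinity>\<close> by dominated convergence.\<close>

lemma sets_circle_measure: "sets circle_measure = sets (restrict_space lborel {-pi..pi})"
  unfolding circle_measure_def by simp

lemma space_circle_measure [simp]: "space circle_measure = {-pi..pi}"
  unfolding circle_measure_def by simp

lemma nn_integral_circle_measure:
  assumes [measurable]: "h \<in> borel_measurable borel"
  shows "(\<integral>\<^sup>+x. h x * indicator {-pi..pi} x \<partial>lborel) = ennreal (2*pi) * (\<integral>\<^sup>+x. h x \<partial>circle_measure)"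
proof -
  have "(\<integral>\<^sup>+x. h x \<partial>circle_measure) = (\<integral>\<^sup>+x. ennreal (1/(2*pi)) * h x \<partial>restrict_space lborel {-pi..pi})"
    unfolding circle_measure_def
    by (subst nn_integral_density) (auto intro: measurable_restrict_space1)
  also have "\<dots> = (\<integral>\<^sup>+x. ennreal (1/(2*pi)) * (h x * indicator {-pi..pi} x) \<partial>lborel)"
    by (subst nn_integral_restrict_space) (auto simp: mult.assoc)
  also have "\<dots> = ennreal (1/(2*pi)) * (\<integral>\<^sup>+x. h x * indicator {-pi..pi} x \<partial>lborel)"
    by (rule nn_integral_cmult) simp
  finally have "ennreal (2*pi) * (\<integral>\<^sup>+x. h x \<partial>circle_measure)
      = ennreal (2*pi) * ennreal (1/(2*pi)) * (\<integral>\<^sup>+x. h x * indicator {-pi..pi} x \<partial>lborel)"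
    by (simp add: mult.assoc)
  also have "ennreal (2*pi) * ennreal (1/(2*pi)) = 1"
    by (simp flip: ennreal_mult)
  finally show ?thesis by simp
qed

definition principal_angle :: "real \<Rightarrow> real" where
  "principal_angle s = s - 2*pi*real_of_int \<lfloor>(s+pi)/(2*pi)\<rfloor>"

lemma principal_angle_in_range: "principal_angle s \<in> {-pi..pi}"
proof -
  let ?k = "real_of_int \<lfloor>(s+pi)/(2*pi)\<rfloor>"
  have "?k \<le> (s+pi)/(2*pi)" "(s+pi)/(2*pi) < ?k + 1" by linarith+
  then have "?k * (2*pi) \<le> s + pi" "s + pi < (?k + 1) * (2*pi)"
    by (simp_all only: pos_le_divide_eq pos_divide_less_eq pi_gt_zero zero_less_mult_iff zero_less_numeral
        simp_thms)
  then show ?thesis unfolding principal_angle_def by (auto simp: algebra_simps)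
qed

lemma borel_measurable_principal_angle [measurable]: "principal_angle \<in> borel_measurable borel"
  unfolding principal_angle_def by measurable

lemma cis_principal_angle [simp]: "cis (principal_angle s) = cis s"
proof -
  have "cis (principal_angle s) = cis s * cis (- (2*pi*real_of_int \<lfloor>(s+pi)/(2*pi)\<rfloor>))"
    unfolding principal_angle_def by (simp add: cis_mult)
  also have "cis (- (2*pi*real_of_int \<lfloor>(s+pi)/(2*pi)\<rfloor>)) = 1"
    using cis_multiple_2pi[of "- real_of_int \<lfloor>(s+pi)/(2*pi)\<rfloor>"] by simp
  finally show ?thesis by simp
qed

lemma cis_add_2pi [simp]: "cis (s + 2*pi) = cis s"
  by (simp flip: cis_mult)

lemma borel_measurable_cis_comp_circle_measure:
  assumes "(\<lambda>s. f (cis s)) \<in> borel_measurable circle_measure"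
  shows "(\<lambda>s. f (cis s)) \<in> borel_measurable borel"
proof -
  have "(\<lambda>s. f (cis s)) \<in> borel_measurable (restrict_space lborel {-pi..pi})"
    using assms measurable_cong_sets[OF sets_circle_measure refl] by blast
  moreover have "principal_angle \<in> measurable lborel (restrict_space lborel {-pi..pi})"
    by (rule measurable_restrict_space2) (use principal_angle_in_range in auto)
  ultimately have "(\<lambda>s. f (cis (principal_angle s))) \<in> borel_measurable lborel"
    by (rule measurable_compose[rotated])
  then show ?thesis by simp
qed

lemma dist_cis_cis_diff: "dist (cis a) (cis (a - t)) = 2 * \<bar>sin (t/2)\<bar>"
proof -
  have "cis a - cis (a - t) = cis a * (1 - cis (-t))"
    by (simp add: algebra_simps cis_mult)
  then have "dist (cis a) (cis (a - t)) = cmod (1 - cis (-t))"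
    by (simp add: dist_norm norm_mult)
  also have "\<dots> = sqrt ((1 - cos t)^2 + (sin t)^2)"
    by (simp add: cmod_def)
  also have "(1 - cos t)^2 + (sin t)^2 = 2 - 2 * cos t"
    using sin_cos_squared_add[of t] by (simp add: power2_eq_square algebra_simps)
  also have "\<dots> = (2 * \<bar>sin (t/2)\<bar>)^2"
    using cos_double_sin[of "t/2"] by (simp add: power_mult_distrib)
  finally show ?thesis by (simp only: real_sqrt_abs)
qed

lemma abs_cot_half_le:
  fixes t :: real
  assumes "0 < D" "D \<le> 2 * \<bar>sin (t/2)\<bar>"
  shows "\<bar>cot (t/2)\<bar> \<le> 2 / D"
proof -
  have "\<bar>cot (t/2)\<bar> = \<bar>cos (t/2)\<bar> / \<bar>sin (t/2)\<bar>"
    by (simp add: cot_def)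
  also have "\<dots> \<le> 1 / \<bar>sin (t/2)\<bar>"
    using assms by (intro divide_right_mono) auto
  also have "\<dots> \<le> 1 / (D/2)"
    using assms by (intro divide_left_mono) auto
  finally show ?thesis by simp
qed

lemma nn_integral_periodic_shift:
  fixes G :: "real \<Rightarrow> ennreal"
  assumes [measurable]: "G \<in> borel_measurable borel" and periodic: "\<And>s. G (s + 2*pi) = G s"
  shows "(\<integral>\<^sup>+s. G s * indicator {a + 2*pi..b + 2*pi} s \<partial>lborel) = (\<integral>\<^sup>+s. G s * indicator {a..b} s \<partial>lborel)"
proof -
  have "(\<integral>\<^sup>+s. G s * indicator {a + 2*pi..b + 2*pi} s \<partial>lborel)
      = ennreal \<bar>1\<bar> * (\<integral>\<^sup>+s. G (2*pi + 1 * s) * indicator {a + 2*pi..b + 2*pi} (2*pi + 1 * s) \<partial>lborel)"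
    by (rule nn_integral_real_affine) auto
  also have "\<dots> = (\<integral>\<^sup>+s. G (2*pi + 1 * s) * indicator {a + 2*pi..b + 2*pi} (2*pi + 1 * s) \<partial>lborel)"
    by simp
  also have "\<dots> = (\<integral>\<^sup>+s. G s * indicator {a..b} s \<partial>lborel)"
    by (intro nn_integral_cong) (auto simp: periodic add.commute indicator_def)
  finally show ?thesis .
qed

text \<open>The reflected interval \<open>\<theta> - [-\<pi>, \<pi>]\<close> is covered by three translates of \<open>[-\<pi>, \<pi>]\<close>.\<close>

lemma nn_integral_periodic_translate_le:
  fixes G :: "real \<Rightarrow> ennreal"
  assumes [measurable]: "G \<in> borel_measurable borel" and periodic: "\<And>s. G (s + 2*pi) = G s"
    and \<theta>: "\<theta> \<in> {-pi..pi}"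
  shows "(\<integral>\<^sup>+t. G (\<theta> - t) * indicator {-pi..pi} t \<partial>lborel) \<le> 3 * (\<integral>\<^sup>+s. G s * indicator {-pi..pi} s \<partial>lborel)"
proof -
  let ?I = "\<lambda>a b. \<integral>\<^sup>+s. G s * indicator {a..b} s \<partial>lborel"
  have "(\<integral>\<^sup>+t. G (\<theta> - t) * indicator {-pi..pi} t \<partial>lborel)
      = ennreal \<bar>-1\<bar> * (\<integral>\<^sup>+s. G (\<theta> - (\<theta> + (-1) * s)) * indicator {-pi..pi} (\<theta> + (-1) * s) \<partial>lborel)"
    by (rule nn_integral_real_affine) auto
  also have "\<dots> = (\<integral>\<^sup>+s. G s * indicator {-pi..pi} (\<theta> - s) \<partial>lborel)"
    by simp
  also have "\<dots> \<le> (\<integral>\<^sup>+s. G s * indicator {-pi - 2*pi..pi - 2*pi} s + G s * indicator {-pi..pi} s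
        + G s * indicator {-pi + 2*pi..pi + 2*pi} s \<partial>lborel)"
    using \<theta> by (intro nn_integral_mono) (auto simp: indicator_def)
  also have "\<dots> = ?I (-pi - 2*pi) (pi - 2*pi) + ?I (-pi) pi + ?I (-pi + 2*pi) (pi + 2*pi)"
    by (simp add: nn_integral_add)
  also have "?I (-pi + 2*pi) (pi + 2*pi) = ?I (-pi) pi"
    by (rule nn_integral_periodic_shift[where G = G, OF assms(1) periodic])
  also have "?I (-pi - 2*pi) (pi - 2*pi) = ?I (-pi) pi"
    using nn_integral_periodic_shift[where G = G and a = "-pi - 2*pi" and b = "pi - 2*pi", OF assms(1) periodic]
    by simp
  also have "?I (-pi) pi + ?I (-pi) pi + ?I (-pi) pi = (1 + 1 + 1) * ?I (-pi) pi"
    by (simp only: distrib_right mult_1)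
  finally show ?thesis
    by simp
qed

lemma conj_fun_eq_of_vanishing_near:
  assumes "0 < D" and vanish: "\<And>t. v (cis (\<theta> - t)) \<noteq> 0 \<Longrightarrow> D \<le> \<bar>t\<bar>"
  shows "conj_fun v \<theta> = 1 / (2*pi) * (LINT t:{t. D \<le> \<bar>t\<bar> \<and> \<bar>t\<bar> \<le> pi}|lborel. v (cis (\<theta> - t)) * cot (t/2))"
proof -
  let ?F = "\<lambda>e. LINT t:{t. e \<le> \<bar>t\<bar> \<and> \<bar>t\<bar> \<le> pi}|lborel. v (cis (\<theta> - t)) * cot (t/2)"
  have F_eq: "?F e = ?F D" if "0 < e" "e \<le> D" for e
    unfolding set_lebesgue_integral_def
  proof (intro Bochner_Integration.integral_cong refl)
    fix t
    have "v (cis (\<theta> - t)) = 0 \<or> (t \<in> {t. e \<le> \<bar>t\<bar> \<and> \<bar>t\<bar> \<le> pi} \<longleftrightarrow> t \<in> {t. D \<le> \<bar>t\<bar> \<and> \<bar>t\<bar> \<le> pi})"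
      using vanish[of t] that by auto
    then show "indicator {t. e \<le> \<bar>t\<bar> \<and> \<bar>t\<bar> \<le> pi} t *\<^sub>R (v (cis (\<theta> - t)) * cot (t/2))
        = indicator {t. D \<le> \<bar>t\<bar> \<and> \<bar>t\<bar> \<le> pi} t *\<^sub>R (v (cis (\<theta> - t)) * cot (t/2))"
      unfolding indicator_def by (elim disjE) simp_all
  qed
  have "\<forall>\<^sub>F e in at_right 0. 0 < e \<and> e < D"
    unfolding eventually_at_right_field using \<open>0 < D\<close> by blast
  then have "\<forall>\<^sub>F e in at_right 0. ?F e = ?F D"
    by (rule eventually_mono) (auto intro!: F_eq)
  then have "((\<lambda>e. 1 / (2*pi) * ?F e) \<longlongrightarrow> 1 / (2*pi) * ?F D) (at_right 0)"
    by (intro tendsto_mult_left tendsto_eventually)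
  then show ?thesis
    unfolding conj_fun_def by (intro tendsto_Lim) simp_all
qed

lemma nn_integral_conj_integrand_le:
  fixes v :: "complex \<Rightarrow> real"
  assumes [measurable]: "(\<lambda>s. v (cis s)) \<in> borel_measurable borel" and \<theta>: "\<theta> \<in> {-pi..pi}" and "0 < D"
    and sin_ge: "\<And>t. v (cis (\<theta> - t)) \<noteq> 0 \<Longrightarrow> D \<le> 2 * \<bar>sin (t/2)\<bar>"
  shows "(\<integral>\<^sup>+t. ennreal \<bar>v (cis (\<theta> - t)) * cot (t/2)\<bar> * indicator {-pi..pi} t \<partial>lborel)
    \<le> ennreal (2/D) * (3 * (\<integral>\<^sup>+s. ennreal \<bar>v (cis s)\<bar> * indicator {-pi..pi} s \<partial>lborel))"
proof -
  have kernel_le: "ennreal \<bar>v (cis (\<theta> - t)) * cot (t/2)\<bar> \<le> ennreal (2/D) * ennreal \<bar>v (cis (\<theta> - t))\<bar>" for t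
  proof (cases "v (cis (\<theta> - t)) = 0")
    case False
    have "\<bar>v (cis (\<theta> - t)) * cot (t/2)\<bar> \<le> \<bar>v (cis (\<theta> - t))\<bar> * (2/D)"
      unfolding abs_mult using abs_cot_half_le[OF \<open>0 < D\<close> sin_ge[OF False]] by (intro mult_left_mono) auto
    then have "ennreal \<bar>v (cis (\<theta> - t)) * cot (t/2)\<bar> \<le> ennreal (2/D * \<bar>v (cis (\<theta> - t))\<bar>)"
      by (intro ennreal_leI) (simp add: mult.commute)
    also have "\<dots> = ennreal (2/D) * ennreal \<bar>v (cis (\<theta> - t))\<bar>"
      using \<open>0 < D\<close> by (subst ennreal_mult) auto
    finally show ?thesis .
  qed simp
  have "(\<integral>\<^sup>+t. ennreal \<bar>v (cis (\<theta> - t)) * cot (t/2)\<bar> * indicator {-pi..pi} t \<partial>lborel)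
      \<le> (\<integral>\<^sup>+t. ennreal (2/D) * (ennreal \<bar>v (cis (\<theta> - t))\<bar> * indicator {-pi..pi} t) \<partial>lborel)"
    using kernel_le by (intro nn_integral_mono) (auto simp: indicator_def)
  also have "\<dots> = ennreal (2/D) * (\<integral>\<^sup>+t. ennreal \<bar>v (cis (\<theta> - t))\<bar> * indicator {-pi..pi} t \<partial>lborel)"
    by (rule nn_integral_cmult) measurable
  also have "\<dots> \<le> ennreal (2/D) * (3 * (\<integral>\<^sup>+s. ennreal \<bar>v (cis s)\<bar> * indicator {-pi..pi} s \<partial>lborel))"
    by (intro mult_left_mono nn_integral_periodic_translate_le \<theta>) auto
  finally show ?thesis .
qed

lemma abs_conj_fun_le_of_vanishing_near:
  fixes v :: "complex \<Rightarrow> real"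
  assumes int: "integrable circle_measure (\<lambda>s. v (cis s))" and \<theta>: "\<theta> \<in> {-pi..pi}" and "0 < D"
    and far: "\<And>z. z \<in> sphere 0 1 \<Longrightarrow> v z \<noteq> 0 \<Longrightarrow> D \<le> dist (cis \<theta>) z"
  shows "\<bar>conj_fun v \<theta>\<bar> \<le> 6 / D * (\<integral>s. \<bar>v (cis s)\<bar> \<partial>circle_measure)"
proof -
  let ?I = "\<integral>s. \<bar>v (cis s)\<bar> \<partial>circle_measure"
  define g where "g = (\<lambda>t. indicator {t. D \<le> \<bar>t\<bar> \<and> \<bar>t\<bar> \<le> pi} t * (v (cis (\<theta> - t)) * cot (t/2)))"
  have [measurable]: "(\<lambda>s. v (cis s)) \<in> borel_measurable borel"
    using borel_measurable_integrable[OF int] by (rule borel_measurable_cis_comp_circle_measure)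
  have sin_ge: "D \<le> 2 * \<bar>sin (t/2)\<bar>" if "v (cis (\<theta> - t)) \<noteq> 0" for t
    using far[of "cis (\<theta> - t)"] that by (simp add: dist_cis_cis_diff)
  have "D \<le> \<bar>t\<bar>" if "v (cis (\<theta> - t)) \<noteq> 0" for t
    using sin_ge[OF that] abs_sin_x_le_abs_x[of "t/2"] by simp
  from conj_fun_eq_of_vanishing_near[OF \<open>0 < D\<close> this]
  have conj_fun_eq: "conj_fun v \<theta> = 1 / (2*pi) * integral\<^sup>L lborel g"
    by (simp add: g_def set_lebesgue_integral_def)
  have "(\<integral>\<^sup>+t. ennreal \<bar>g t\<bar> \<partial>lborel)
      \<le> (\<integral>\<^sup>+t. ennreal \<bar>v (cis (\<theta> - t)) * cot (t/2)\<bar> * indicator {-pi..pi} t \<partial>lborel)"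
    by (intro nn_integral_mono) (auto simp: g_def indicator_def)
  also have "\<dots> \<le> ennreal (2/D) * (3 * (\<integral>\<^sup>+s. ennreal \<bar>v (cis s)\<bar> * indicator {-pi..pi} s \<partial>lborel))"
    by (rule nn_integral_conj_integrand_le[OF _ \<theta> \<open>0 < D\<close> sin_ge]) measurable
  also have "(\<integral>\<^sup>+s. ennreal \<bar>v (cis s)\<bar> * indicator {-pi..pi} s \<partial>lborel) = ennreal (2*pi) * ennreal ?I"
    by (simp add: nn_integral_circle_measure nn_integral_eq_integral int)
  finally have nn_le: "(\<integral>\<^sup>+t. ennreal \<bar>g t\<bar> \<partial>lborel) \<le> ennreal (2/D) * (3 * (ennreal (2*pi) * ennreal ?I))" .
  have "\<bar>integral\<^sup>L lborel g\<bar> \<le> integral\<^sup>L lborel (\<lambda>t. \<bar>g t\<bar>)"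
    using integral_norm_bound[of lborel g] by simp
  also have "\<dots> = enn2real (\<integral>\<^sup>+t. ennreal \<bar>g t\<bar> \<partial>lborel)"
    by (rule integral_eq_nn_integral) (auto simp: g_def cot_def)
  also have "\<dots> \<le> 2/D * (3 * (2*pi * ?I))"
    using enn2real_mono[OF nn_le] \<open>0 < D\<close> by (simp add: enn2real_mult integral_nonneg_AE ennreal_mult_less_top)
  finally have "\<bar>conj_fun v \<theta>\<bar> \<le> 1 / (2*pi) * (2/D * (3 * (2*pi * ?I)))"
    unfolding conj_fun_eq abs_mult by (intro mult_mono) auto
  also have "\<dots> = 6 / D * ?I"
    by (simp add: field_simps)
  finally show ?thesis .
qed

lemma integrable_min_add_zero:
  fixes f :: "'a \<Rightarrow> real"
  assumes "integrable M f" and "0 \<le> c"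
  shows "integrable M (\<lambda>x. min (f x + c) 0)"
proof (rule Bochner_Integration.integrable_bound[OF assms(1)])
  show "(\<lambda>x. min (f x + c) 0) \<in> borel_measurable M"
    using borel_measurable_integrable[OF assms(1)] by measurable
  show "AE x in M. norm (min (f x + c) 0) \<le> norm (f x)"
    using \<open>0 \<le> c\<close> by (intro AE_I2) auto
qed

lemma tendsto_integral_min_add_zero:
  fixes f :: "'a \<Rightarrow> real"
  assumes "integrable M f"
  shows "(\<lambda>n::nat. \<integral>x. \<bar>min (f x + real n) 0\<bar> \<partial>M) \<longlonglongrightarrow> 0"
proof -
  have "(\<lambda>n::nat. \<integral>x. \<bar>min (f x + real n) 0\<bar> \<partial>M) \<longlonglongrightarrow> (\<integral>x. 0 \<partial>M)"
  proof (rule integral_dominated_convergence[where w = "\<lambda>x. \<bar>f x\<bar>"])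
    show "(\<lambda>x. \<bar>min (f x + real n) 0\<bar>) \<in> borel_measurable M" for n
      using borel_measurable_integrable[OF assms] by measurable
    show "AE x in M. (\<lambda>n. \<bar>min (f x + real n) 0\<bar>) \<longlonglongrightarrow> 0"
    proof (intro AE_I2 tendsto_eventually)
      fix x
      obtain n0 :: nat where "- f x \<le> n0"
        using real_arch_simple by blast
      then show "\<forall>\<^sub>F n in sequentially. \<bar>min (f x + real n) 0\<bar> = 0"
        unfolding eventually_sequentially by (intro exI[of _ n0]) auto
    qed
    show "AE x in M. norm \<bar>min (f x + real n) 0\<bar> \<le> \<bar>f x\<bar>" for n
      by (intro AE_I2) auto
  qed (use assms in auto)
  then show ?thesis
    by simp
qed

lemma exists_truncation_level:
  fixes f :: "'a \<Rightarrow> real"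
  assumes "integrable M f" and "0 < \<eta>"
  shows "\<exists>n::nat. (\<integral>x. \<bar>min (f x + real n) 0\<bar> \<partial>M) < \<eta> \<and> b \<le> real n"
proof -
  have "\<forall>\<^sub>F n in sequentially. (\<integral>x. \<bar>min (f x + real n) 0\<bar> \<partial>M) < \<eta>"
    using order_tendstoD(2)[OF tendsto_integral_min_add_zero[OF assms(1)] assms(2)] .
  moreover have "\<forall>\<^sub>F n in sequentially. b \<le> real n"
    by (rule eventually_sequentiallyI[of "nat \<lceil>b\<rceil>"]) linarith
  ultimately show ?thesis
    using eventually_happens'[OF sequentially_bot eventually_conj] by blast
qed

lemma apical_HS_weight_of_truncation:
  fixes w :: "complex \<Rightarrow> real" and c M :: real
  assumes bounded: "bounded (w ` sphere 0 1)" and pos: "\<forall>z \<in> sphere 0 1. w z > 0"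
    and int: "integrable circle_measure (\<lambda>\<theta>. ln (w (cis \<theta>)))" and "0 \<le> c" and "M < pi / 2"
    and conj_le: "\<And>\<theta>. \<theta> \<in> {-pi..pi} \<Longrightarrow> cis \<theta> \<in> Lplus w \<delta> \<Longrightarrow>
      \<bar>conj_fun (\<lambda>z. min (ln (w z) + c) 0) \<theta>\<bar> \<le> M"
  shows "apical_HS_weight w \<delta>"
proof -
  define u where "u = (\<lambda>z. max (ln (w z)) (- c))"
  define v where "v = (\<lambda>z. min (ln (w z) + c) 0)"
  obtain K where K: "\<And>s. w (cis s) \<le> K"
    using bounded unfolding bounded_iff by (metis abs_le_D1 image_eqI mem_sphere_0 norm_cis real_norm_def)
  have w_pos: "0 < w (cis s)" for s
    using pos by simp
  have u_bound: "\<bar>u (cis s)\<bar> \<le> \<bar>ln K\<bar> + c" for s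
  proof -
    have "ln (w (cis s)) \<le> ln K"
      using K[of s] w_pos[of s] by simp
    with \<open>0 \<le> c\<close> show ?thesis
      unfolding u_def by auto
  qed
  have "u (cis s) + v (cis s) = ln (w (cis s))" for s
    unfolding u_def v_def by (auto simp: min_def max_def)
  then have w_eq: "w (cis s) = exp (u (cis s) + v (cis s))" for s
    using w_pos by simp
  show ?thesis
    unfolding apical_HS_weight_def
  proof (intro conjI bounded pos, rule exI[of _ u], rule exI[of _ v], intro conjI)
    show "(\<lambda>\<theta>. u (cis \<theta>)) \<in> borel_measurable circle_measure"
      using borel_measurable_integrable[OF int] unfolding u_def by measurable
    show "\<exists>B. AE \<theta> in circle_measure. \<bar>u (cis \<theta>)\<bar> \<le> B"
      using u_bound by (intro exI AE_I2)
    show "integrable circle_measure (\<lambda>\<theta>. v (cis \<theta>))"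
      unfolding v_def by (rule integrable_min_add_zero[OF int \<open>0 \<le> c\<close>])
    show "AE \<theta> in circle_measure. w (cis \<theta>) = exp (u (cis \<theta>) + v (cis \<theta>))"
      using w_eq by (intro AE_I2)
    show "\<exists>M < pi / 2. AE \<theta> in circle_measure. cis \<theta> \<in> Lplus w \<delta> \<longrightarrow> \<bar>conj_fun v \<theta>\<bar> \<le> M"
      unfolding v_def using \<open>M < pi / 2\<close> conj_le by (intro exI[of _ M] conjI AE_I2) auto
  qed
qed

lemma min_ln_add_eq_zero_off_Lminus:
  assumes "0 < w z" and "z \<in> sphere 0 1" and "z \<notin> Lminus w \<epsilon>"
    and "exp (- c) \<le> ess_norm_inf w * \<epsilon>"
  shows "min (ln (w z) + c) 0 = 0"
proof -
  have "exp (- c) \<le> w z"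
    using assms unfolding Lminus_def by auto
  with \<open>0 < w z\<close> have "- c \<le> ln (w z)"
    by (simp add: ln_ge_iff)
  then show ?thesis
    by simp
qed

theorem lemma1:
  fixes w :: "complex \<Rightarrow> real" and \<delta> :: real
  assumes "bounded (w ` sphere 0 1)"
    and "\<forall>z \<in> sphere 0 1. w z > 0"
    and "integrable circle_measure (\<lambda>\<theta>. ln (w (cis \<theta>)))"
    and "0 < \<delta>" and "\<delta> < 1"
    and "\<exists>\<epsilon>. 0 < \<epsilon> \<and> \<epsilon> < \<delta> \<and> setdist (Lplus w \<delta>) (Lminus w \<epsilon>) > 0"
  shows "apical_HS_weight w \<delta>"
proof -
  obtain \<epsilon> where D_pos: "0 < setdist (Lplus w \<delta>) (Lminus w \<epsilon>)"
    using assms(6) by blast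
  define D where "D = setdist (Lplus w \<delta>) (Lminus w \<epsilon>)"
  have "Lminus w \<epsilon> \<noteq> {}"
    using D_pos by auto
  then have level_pos: "0 < ess_norm_inf w * \<epsilon>"
    unfolding Lminus_def by force
  obtain n :: nat where small: "(\<integral>s. \<bar>min (ln (w (cis s)) + real n) 0\<bar> \<partial>circle_measure) < pi * D / 12"
    and "- ln (ess_norm_inf w * \<epsilon>) \<le> real n"
    using exists_truncation_level[OF assms(3), of "pi * D / 12"] D_pos by (auto simp: D_def)
  with level_pos have exp_le: "exp (- real n) \<le> ess_norm_inf w * \<epsilon>"
    using ln_ge_iff[of "ess_norm_inf w * \<epsilon>" "- real n"] by linarith
  define v where "v = (\<lambda>z. min (ln (w z) + real n) 0)"
  have "\<bar>conj_fun v \<theta>\<bar> \<le> 6 / D * (\<integral>s. \<bar>v (cis s)\<bar> \<partial>circle_measure)"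
    if "\<theta> \<in> {-pi..pi}" "cis \<theta> \<in> Lplus w \<delta>" for \<theta>
  proof (rule abs_conj_fun_le_of_vanishing_near)
    show "integrable circle_measure (\<lambda>s. v (cis s))"
      unfolding v_def using integrable_min_add_zero[OF assms(3)] by simp
    show "D \<le> dist (cis \<theta>) z" if "z \<in> sphere 0 1" "v z \<noteq> 0" for z
      using that assms(2) min_ln_add_eq_zero_off_Lminus[OF _ _ _ exp_le] setdist_le_dist[OF \<open>cis \<theta> \<in> Lplus w \<delta>\<close>]
      unfolding v_def D_def by blast
  qed (use that D_pos D_def in auto)
  moreover have "6 / D * (\<integral>s. \<bar>v (cis s)\<bar> \<partial>circle_measure) < pi / 2"
    using small D_pos by (simp add: v_def D_def field_simps)
  ultimately show ?thesis
    unfolding v_def by (intro apical_HS_weight_of_truncation[OF assms(1-3), of "real n"]) auto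
qed

end
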